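(* Let $\{z_n\}_{n \geq 1}$ be a sequence in $\mathbb{C} \setminus\{i\}$. Then $\prod_{n \geq 1} z_n$ converges absolutely if and only if $\prod_{n \geq 1} T(z_n)$ converges absolutely.
   Context: $T(z) = i\frac{1-iz}{1+iz}$ (defined for $z\neq i$). A product $\prod_{n\ge1} w_n$ is said to converge absolutely if $\sum_{n\ge1}|1-w_n|<\infty$. *)

theory Defs
  imports "HOL-Analysis.Analysis"
begin

definition T :: "complex \<Rightarrow> complex" where
  "T z = \<i> * (1 - \<i> * z) / (1 + \<i> * z)"

text \<open>The product over n \<ge> 1 of w n converges absolutely iff the sum over n \<ge> 1 of |1 - w n| is finite.\<close>
definition abs_conv_prod :: "(nat \<Rightarrow> complex) \<Rightarrow> bool" where
  "abs_conv_prod w \<longleftrightarrow> summable (\<lambda>n. norm (1 - w (Suc n)))"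

end

theory Submission
  imports Defs
begin

text \<open>Both directions follow from one identity each: \<open>1 - T z = (1 - z) (1 - \<i>) / (1 + \<i> z)\<close>
  and \<open>1 - z = (1 - T z) (1 + \<i>) / (1 - \<i> T z)\<close>. Summability of \<open>|1 - u n|\<close> forces \<open>u n \<rightarrow> 1\<close>,
  where both factors are continuous, hence eventually bounded, and comparison does the rest.\<close>

lemma summable_norm_one_minus_factor:
  fixes u v :: "nat \<Rightarrow> 'a::real_normed_algebra_1"
  assumes summable: "summable (\<lambda>n. norm (1 - u n))"
    and cont: "isCont f 1"
    and factor: "eventually (\<lambda>n. 1 - v n = (1 - u n) * f (u n)) sequentially"
  shows "summable (\<lambda>n. norm (1 - v n))"
proof -
  have "(\<lambda>n. 1 - u n) \<longlonglongrightarrow> 0"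
    using summable_LIMSEQ_zero[OF summable] by (simp add: tendsto_norm_zero_iff)
  then have "u \<longlonglongrightarrow> 1"
    using tendsto_diff[OF tendsto_const[of 1]] by fastforce
  then have "convergent (\<lambda>n. f (u n))"
    using cont convergent_def isCont_tendsto_compose by blast
  then obtain B where B: "\<And>n. norm (f (u n)) \<le> B"
    using convergent_imp_Bseq BseqE by metis
  have "eventually (\<lambda>n. norm (norm (1 - v n)) \<le> B * norm (1 - u n)) sequentially"
    using factor
  proof eventually_elim
    case (elim n)
    have "norm (1 - v n) \<le> norm (1 - u n) * norm (f (u n))"
      unfolding elim by (rule norm_mult_ineq)
    also have "\<dots> \<le> norm (1 - u n) * B"
      using B by (intro mult_left_mono) auto
    finally show ?case by (simp add: mult.commute)
  qed
  then show ?thesis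
    by (rule summable_comparison_test_ev) (intro summable_mult summable)
qed

lemma abs_conv_prod_factor:
  assumes "abs_conv_prod u" "isCont f 1" "\<And>n. n \<ge> 1 \<Longrightarrow> 1 - v n = (1 - u n) * f (u n)"
  shows "abs_conv_prod v"
  using assms summable_norm_one_minus_factor[of "\<lambda>n. u (Suc n)" f "\<lambda>n. v (Suc n)"]
  unfolding abs_conv_prod_def by simp

lemma one_plus_i_mult_nonzero:
  assumes "z \<noteq> \<i>"
  shows "1 + \<i> * z \<noteq> 0"
proof
  assume "1 + \<i> * z = 0"
  then have "\<i> * (1 + \<i> * z) = 0" by simp
  then show False using assms by (simp add: algebra_simps)
qed

lemma one_minus_T:
  assumes "z \<noteq> \<i>"
  shows "1 - T z = (1 - z) * ((1 - \<i>) / (1 + \<i> * z))"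
  using one_plus_i_mult_nonzero[OF assms] unfolding T_def by (simp add: field_simps)

lemma one_minus_via_T:
  assumes "z \<noteq> \<i>"
  shows "1 - z = (1 - T z) * ((1 + \<i>) / (1 - \<i> * T z))"
proof -
  have nz: "1 + \<i> * z \<noteq> 0" using one_plus_i_mult_nonzero[OF assms] .
  have denom: "1 - \<i> * T z = 2 / (1 + \<i> * z)"
    using nz unfolding T_def by (simp add: field_simps)
  have "(1 - T z) * ((1 + \<i>) / (1 - \<i> * T z))
      = (1 - z) * ((1 - \<i>) / (1 + \<i> * z)) * ((1 + \<i>) / (2 / (1 + \<i> * z)))"
    by (simp only: one_minus_T[OF assms] denom)
  also have "\<dots> = (1 - z) * ((1 - \<i>) * (1 + \<i>) / 2)"
    using nz by simp
  also have "\<dots> = 1 - z"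
    by (simp add: field_simps)
  finally show ?thesis ..
qed

theorem lemma4p2:
  fixes z :: "nat \<Rightarrow> complex"
  assumes "\<forall>n\<ge>1. z n \<noteq> \<i>"
  shows "abs_conv_prod z \<longleftrightarrow> abs_conv_prod (\<lambda>n. T (z n))"
proof
  assume "abs_conv_prod z"
  moreover have "isCont (\<lambda>w. (1 - \<i>) / (1 + \<i> * w)) 1"
    by (intro continuous_intros) (simp add: complex_eq_iff)
  ultimately show "abs_conv_prod (\<lambda>n. T (z n))"
    by (rule abs_conv_prod_factor) (use assms one_minus_T in auto)
next
  assume "abs_conv_prod (\<lambda>n. T (z n))"
  moreover have "isCont (\<lambda>w. (1 + \<i>) / (1 - \<i> * w)) 1"
    by (intro continuous_intros) (simp add: complex_eq_iff)
  ultimately show "abs_conv_prod z"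
    by (rule abs_conv_prod_factor) (use assms one_minus_via_T in auto)
qed

end
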